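(* Let $r$ be a bihomogeneous Hermitian symmetric polynomial on $\mathbb{C}^n$ of total degree $2m$. Then $r\in\mathcal{P}_\infty$ if and only if the operator $T_r$ is non-negative definite on $V_m$, that is, $\langle T_rf,f\rangle=\int_{B_n}\int_{B_n} r(z,\overline w)f(w)\overline{f(z)}\,dV(w)\,dV(z)\ge0$ for all $f\in V_m$.
   Context: A Hermitian symmetric polynomial $r(z,\overline w)=\sum c_{\alpha\beta}z^\alpha\overline w^\beta$ ($c_{\alpha\beta}=\overline{c_{\beta\alpha}}$) is bihomogeneous of total degree $2m$ if $r(\lambda w,\overline\lambda\overline w)=|\lambda|^{2m}r(w,\overline w)$ for all $\lambda\in\mathbb{C}$. $\mathcal{P}_\infty$ is the set of $r$ with $r(z,\overline z)=\|h(z)\|^2$ for some holomorphic polynomial mapping $h$. $B_n$ is the unit ball of $\mathbb{C}^n$, $dV$ Lebesgue measure, $V_m$ the space of homogeneous holomorphic polynomials of degree $m$ on $\mathbb{C}^n$, and $(T_rf)(z)=\int_{B_n}r(z,\overline w)f(w)\,dV(w)$. *)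

theory Defs
  imports "HOL-Analysis.Analysis"
begin

text \<open>Points of C^n are vectors of type complex^'n ('n finite, n = CARD('n)).
  Multi-indices are functions 'n => nat.\<close>

definition mono :: "complex^'n \<Rightarrow> ('n::finite \<Rightarrow> nat) \<Rightarrow> complex" where
  "mono z \<alpha> = (\<Prod>i\<in>UNIV. (z $ i) ^ (\<alpha> i))"

text \<open>A polynomial r(z, conj w) = sum c_{alpha beta} z^alpha conj(w)^beta,
  given by a finitely supported coefficient function c.\<close>

definition finite_coeffs2 :: "(('n::finite \<Rightarrow> nat) \<Rightarrow> ('n \<Rightarrow> nat) \<Rightarrow> complex) \<Rightarrow> bool" where
  "finite_coeffs2 c \<longleftrightarrow> finite {(\<alpha>, \<beta>). c \<alpha> \<beta> \<noteq> 0}"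

definition rval :: "(('n::finite \<Rightarrow> nat) \<Rightarrow> ('n \<Rightarrow> nat) \<Rightarrow> complex) \<Rightarrow> complex^'n \<Rightarrow> complex^'n \<Rightarrow> complex" where
  "rval c z w = (\<Sum>(\<alpha>, \<beta>)\<in>{(\<alpha>, \<beta>). c \<alpha> \<beta> \<noteq> 0}. c \<alpha> \<beta> * mono z \<alpha> * cnj (mono w \<beta>))"

definition hermitian_symmetric :: "(('n::finite \<Rightarrow> nat) \<Rightarrow> ('n \<Rightarrow> nat) \<Rightarrow> complex) \<Rightarrow> bool" where
  "hermitian_symmetric c \<longleftrightarrow> finite_coeffs2 c \<and> (\<forall>\<alpha> \<beta>. c \<alpha> \<beta> = cnj (c \<beta> \<alpha>))"

definition bihomogeneous :: "nat \<Rightarrow> (('n::finite \<Rightarrow> nat) \<Rightarrow> ('n \<Rightarrow> nat) \<Rightarrow> complex) \<Rightarrow> bool" where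
  "bihomogeneous m c \<longleftrightarrow>
     (\<forall>l::complex. \<forall>w. rval c (\<chi> i. l * w $ i) (\<chi> i. l * w $ i) = of_real (cmod l ^ (2*m)) * rval c w w)"

definition hpoly :: "(('n::finite \<Rightarrow> nat) \<Rightarrow> complex) \<Rightarrow> complex^'n \<Rightarrow> complex" where
  "hpoly a z = (\<Sum>\<alpha>\<in>{\<alpha>. a \<alpha> \<noteq> 0}. a \<alpha> * mono z \<alpha>)"

definition P_inf :: "(('n::finite \<Rightarrow> nat) \<Rightarrow> ('n \<Rightarrow> nat) \<Rightarrow> complex) \<Rightarrow> bool" where
  "P_inf c \<longleftrightarrow> (\<exists>(N::nat) (h :: nat \<Rightarrow> ('n \<Rightarrow> nat) \<Rightarrow> complex).
      (\<forall>j<N. finite {\<alpha>. h j \<alpha> \<noteq> 0}) \<and>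
      (\<forall>z. rval c z z = of_real (\<Sum>j<N. (cmod (hpoly (h j) z))\<^sup>2)))"

definition Vm :: "nat \<Rightarrow> (complex^'n::finite \<Rightarrow> complex) set" where
  "Vm m = {f. \<exists>b :: ('n \<Rightarrow> nat) \<Rightarrow> complex.
              f = (\<lambda>z. \<Sum>\<alpha>\<in>{\<alpha>. sum \<alpha> UNIV = m}. b \<alpha> * mono z \<alpha>)}"

definition Top :: "(('n::finite \<Rightarrow> nat) \<Rightarrow> ('n \<Rightarrow> nat) \<Rightarrow> complex) \<Rightarrow> (complex^'n \<Rightarrow> complex) \<Rightarrow> complex^'n \<Rightarrow> complex" where
  "Top c f z = integral (ball 0 1) (\<lambda>w. rval c z w * f w)"

definition Tinner :: "(('n::finite \<Rightarrow> nat) \<Rightarrow> ('n \<Rightarrow> nat) \<Rightarrow> complex) \<Rightarrow> (complex^'n \<Rightarrow> complex) \<Rightarrow> complex" where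
  "Tinner c f = integral (ball 0 1) (\<lambda>z. Top c f z * cnj (f z))"

end

theory Submission
  imports Defs "HOL-Complex_Analysis.Complex_Analysis"
begin

text \<open>By bihomogeneity and polarization, r(z, conj w) is the sesquilinear expression
  \<Sum> c_{\<alpha>\<beta>} z^\<alpha> conj(w)^\<beta> over multi-indices of degree m, so both sides of the equivalence
  are statements about the Hermitian matrix (c_{\<alpha>\<beta>})_{|\<alpha>| = |\<beta>| = m}.
  For f in V_m, \<langle>T_r f, f\<rangle> is the Hermitian form of this matrix evaluated at the moments
  \<langle>z^\<alpha>, f\<rangle> over the ball; since the Gram matrix of the monomials is positive definite, these
  moments can be prescribed arbitrarily, so T_r is non-negative on V_m exactly when the matrix is
  positive semidefinite. Elimination through Schur complements writes a positive semidefinite form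
  as a sum of squared moduli of linear forms, which yields the holomorphic map h with
  r(z, conj z) = \<parallel>h(z)\<parallel>^2; conversely such an h gives \<langle>T_r f, f\<rangle> = \<Sum>_j |\<langle>h_j, f\<rangle>|^2.\<close>

section \<open>Hermitian forms on finite index sets\<close>

definition herm_form :: "'a set \<Rightarrow> ('a \<Rightarrow> 'a \<Rightarrow> complex) \<Rightarrow> ('a \<Rightarrow> complex) \<Rightarrow> complex" where
  "herm_form M c u = (\<Sum>\<alpha>\<in>M. \<Sum>\<beta>\<in>M. c \<alpha> \<beta> * u \<alpha> * cnj (u \<beta>))"

definition hermitian_matrix :: "('a \<Rightarrow> 'a \<Rightarrow> complex) \<Rightarrow> bool" where
  "hermitian_matrix c \<longleftrightarrow> (\<forall>\<alpha> \<beta>. c \<alpha> \<beta> = cnj (c \<beta> \<alpha>))"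

definition schur_complement :: "('a \<Rightarrow> 'a \<Rightarrow> complex) \<Rightarrow> 'a \<Rightarrow> 'a \<Rightarrow> 'a \<Rightarrow> complex" where
  "schur_complement c x \<alpha> \<beta> = c \<alpha> \<beta> - c \<alpha> x * c x \<beta> / c x x"

definition psd_on :: "'a set \<Rightarrow> ('a \<Rightarrow> 'a \<Rightarrow> complex) \<Rightarrow> bool" where
  "psd_on M c \<longleftrightarrow> (\<forall>u. 0 \<le> Re (herm_form M c u))"

definition pd_on :: "'a set \<Rightarrow> ('a \<Rightarrow> 'a \<Rightarrow> complex) \<Rightarrow> bool" where
  "pd_on M c \<longleftrightarrow> (\<forall>u. (\<exists>\<alpha>\<in>M. u \<alpha> \<noteq> 0) \<longrightarrow> 0 < Re (herm_form M c u))"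

lemma herm_form_cong: "(\<And>\<alpha>. \<alpha> \<in> M \<Longrightarrow> u \<alpha> = u' \<alpha>) \<Longrightarrow> herm_form M c u = herm_form M c u'"
  by (simp add: herm_form_def)

lemma herm_form_subset:
  assumes "finite M" "T \<subseteq> M" "\<And>\<alpha>. \<alpha> \<notin> T \<Longrightarrow> u \<alpha> = 0"
  shows "herm_form M c u = herm_form T c u"
proof -
  have "herm_form M c u = (\<Sum>\<alpha>\<in>T. \<Sum>\<beta>\<in>M. c \<alpha> \<beta> * u \<alpha> * cnj (u \<beta>))"
    unfolding herm_form_def by (rule sum.mono_neutral_right) (use assms in auto)
  also have "\<dots> = herm_form T c u"
    unfolding herm_form_def by (intro sum.cong refl sum.mono_neutral_right) (use assms in auto)
  finally show ?thesis .
qed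

lemma herm_form_indicator:
  assumes "x \<in> M" "finite M"
  shows "herm_form M c (\<lambda>\<alpha>. if \<alpha> = x then 1 else 0) = c x x"
  using herm_form_subset[of M "{x}"] assms by (simp add: herm_form_def)

lemma herm_form_identity:
  assumes "finite M"
  shows "herm_form M (\<lambda>\<alpha> \<beta>. if \<alpha> = \<beta> then 1 else 0) u = of_real (\<Sum>\<alpha>\<in>M. (cmod (u \<alpha>))\<^sup>2)"
proof -
  have "(\<Sum>\<beta>\<in>M. (if \<alpha> = \<beta> then 1 else 0) * u \<alpha> * cnj (u \<beta>)) = (if \<alpha> \<in> M then u \<alpha> * cnj (u \<alpha>) else 0)" for \<alpha>
    using assms by (simp add: if_distrib[of "\<lambda>t. t * _"] sum.delta cong: if_cong)
  then show ?thesis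
    using assms by (simp add: herm_form_def of_real_sum flip: complex_norm_square)
qed

lemma hermitian_matrix_diag_real: "hermitian_matrix c \<Longrightarrow> c x x = of_real (Re (c x x))"
  by (metis hermitian_matrix_def Reals_cnj_iff of_real_Re)

lemma hermitian_matrix_schur_complement:
  assumes "hermitian_matrix c"
  shows "hermitian_matrix (schur_complement c x)"
  using assms unfolding hermitian_matrix_def schur_complement_def
  by (metis complex_cnj_diff complex_cnj_divide complex_cnj_mult mult.commute)

lemma herm_form_schur_split:
  fixes u :: "'a \<Rightarrow> complex"
  assumes "hermitian_matrix c" "finite F" "x \<notin> F" "c x x \<noteq> 0"
  defines "L \<equiv> (\<Sum>\<alpha>\<in>insert x F. c \<alpha> x * u \<alpha>)"
  shows "herm_form (insert x F) c u = L * cnj L / c x x + herm_form F (schur_complement c x) u"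
proof -
  let ?I = "insert x F" and ?s = "schur_complement c x"
  have cnjL: "cnj L = (\<Sum>\<beta>\<in>?I. c x \<beta> * cnj (u \<beta>))"
    using assms(1) unfolding L_def hermitian_matrix_def cnj_sum by (metis complex_cnj_mult complex_cnj_cnj)
  have "herm_form F ?s u = herm_form ?I ?s u"
    using assms(2-4) by (simp add: herm_form_def schur_complement_def)
  also have "\<dots> = herm_form ?I c u - (\<Sum>\<alpha>\<in>?I. \<Sum>\<beta>\<in>?I. (c \<alpha> x * u \<alpha>) * (c x \<beta> * cnj (u \<beta>)) / c x x)"
    unfolding herm_form_def schur_complement_def sum_subtractf[symmetric]
    by (intro sum.cong refl) (simp add: field_simps)
  also have "(\<Sum>\<alpha>\<in>?I. \<Sum>\<beta>\<in>?I. (c \<alpha> x * u \<alpha>) * (c x \<beta> * cnj (u \<beta>)) / c x x) = L * cnj L / c x x"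
    unfolding cnjL by (simp only: L_def sum_product sum_divide_distrib)
  finally show ?thesis by simp
qed

lemma herm_form_schur_reduce:
  assumes "hermitian_matrix c" "finite F" "x \<notin> F" "c x x \<noteq> 0"
  shows "herm_form (insert x F) c (u(x := - (\<Sum>\<alpha>\<in>F. c \<alpha> x * u \<alpha>) / c x x))
       = herm_form F (schur_complement c x) u"
proof -
  let ?u = "u(x := - (\<Sum>\<alpha>\<in>F. c \<alpha> x * u \<alpha>) / c x x)"
  have "(\<Sum>\<alpha>\<in>insert x F. c \<alpha> x * ?u \<alpha>) = c x x * ?u x + (\<Sum>\<alpha>\<in>F. c \<alpha> x * u \<alpha>)"
    using assms(2,3) by (auto intro!: sum.cong)
  also have "\<dots> = 0"
    using assms(4) by simp
  finally have "herm_form (insert x F) c ?u = herm_form F (schur_complement c x) ?u"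
    using herm_form_schur_split[OF assms, of ?u] by simp
  also have "\<dots> = herm_form F (schur_complement c x) u"
    using assms(3) by (intro herm_form_cong) auto
  finally show ?thesis .
qed

lemma psd_on_diag_nonneg:
  assumes "psd_on M c" "x \<in> M" "finite M"
  shows "0 \<le> Re (c x x)"
  using spec[OF assms(1)[unfolded psd_on_def], of "\<lambda>\<alpha>. if \<alpha> = x then 1 else 0"] by (simp only: herm_form_indicator[OF assms(2,3)])

lemma pd_on_diag_pos:
  assumes "pd_on M c" "x \<in> M" "finite M"
  shows "0 < Re (c x x)"
  using spec[OF assms(1)[unfolded pd_on_def], of "\<lambda>\<alpha>. if \<alpha> = x then 1 else 0"] assms(2)
  by (simp add: herm_form_indicator[OF assms(2,3)])

lemma psd_on_schur_complement:
  assumes "hermitian_matrix c" "finite F" "x \<notin> F" "c x x \<noteq> 0"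
    and "psd_on (insert x F) c"
  shows "psd_on F (schur_complement c x)"
  using assms(5) unfolding psd_on_def by (simp only: herm_form_schur_reduce[OF assms(1-4), symmetric] simp_thms)

lemma pd_on_schur_complement:
  assumes "hermitian_matrix c" "finite F" "x \<notin> F" "c x x \<noteq> 0"
    and "pd_on (insert x F) c"
  shows "pd_on F (schur_complement c x)"
  unfolding pd_on_def
proof (intro allI impI)
  fix u :: "'a \<Rightarrow> complex"
  assume "\<exists>\<alpha>\<in>F. u \<alpha> \<noteq> 0"
  then have "\<exists>\<alpha>\<in>insert x F. (u(x := - (\<Sum>\<alpha>\<in>F. c \<alpha> x * u \<alpha>) / c x x)) \<alpha> \<noteq> 0"
    using assms(3) by auto
  with assms(5)[unfolded pd_on_def] show "0 < Re (herm_form F (schur_complement c x) u)"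
    by (simp only: herm_form_schur_reduce[OF assms(1-4), symmetric] simp_thms)
qed

text \<open>A zero diagonal entry of a positive semidefinite form forces its whole row to vanish:
  otherwise the form is negative on a suitable combination of the two unit vectors.\<close>

lemma psd_on_zero_diag_row:
  assumes "hermitian_matrix c" "finite M" "x \<in> M" "\<beta> \<in> M" "x \<noteq> \<beta>" "c x x = 0"
    and psd: "psd_on M c"
  shows "c x \<beta> = 0"
proof (rule ccontr)
  assume ne: "c x \<beta> \<noteq> 0"
  define k where "k = c x \<beta>"
  define s :: real where "s = (\<bar>Re (c \<beta> \<beta>)\<bar> + 1) / (2 * (cmod k)\<^sup>2)"
  define u where "u = (\<lambda>\<alpha>. if \<alpha> = x then - of_real s * cnj k else if \<alpha> = \<beta> then 1 else 0)"
  have "c \<beta> x = cnj k"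
    using assms(1) unfolding hermitian_matrix_def k_def by metis
  moreover have "herm_form M c u = herm_form {x, \<beta>} c u"
    by (rule herm_form_subset) (use assms(2-5) in \<open>auto simp: u_def\<close>)
  ultimately have "herm_form M c u = - of_real s * (k * cnj k) - of_real s * cnj (k * cnj k) + c \<beta> \<beta>"
    using assms(5,6) by (simp add: herm_form_def u_def k_def)
  also have "k * cnj k = of_real ((cmod k)\<^sup>2)"
    by (simp only: complex_norm_square)
  finally have "Re (herm_form M c u) = - 2 * s * (cmod k)\<^sup>2 + Re (c \<beta> \<beta>)"
    by simp
  moreover have "2 * s * (cmod k)\<^sup>2 = \<bar>Re (c \<beta> \<beta>)\<bar> + 1"
    using ne by (simp add: s_def k_def)
  ultimately have "Re (herm_form M c u) < 0"
    by linarith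
  then show False
    using psd unfolding psd_on_def by (metis not_le)
qed

lemma psd_on_drop_zero_diag:
  assumes "hermitian_matrix c" "finite F" "x \<notin> F" "c x x = 0"
    and psd: "psd_on (insert x F) c"
  shows "herm_form (insert x F) c u = herm_form F c u"
proof -
  have row: "c x \<beta> = 0" if "\<beta> \<in> F" for \<beta>
    using psd_on_zero_diag_row[OF assms(1) _ _ _ _ assms(4) psd] that assms(2,3) by auto
  moreover have "c \<beta> x = 0" if "\<beta> \<in> F" for \<beta>
    using row[OF that] assms(1) by (metis hermitian_matrix_def complex_cnj_zero)
  ultimately show ?thesis
    using assms(2-4) by (simp add: herm_form_def)
qed

lemma sum_insert_zeroed:
  fixes a u :: "'a \<Rightarrow> complex"
  assumes "finite F" "x \<notin> F"
  shows "(\<Sum>\<alpha>\<in>insert x F. (if \<alpha> = x then 0 else a \<alpha>) * u \<alpha>) = (\<Sum>\<alpha>\<in>F. a \<alpha> * u \<alpha>)"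
  using assms by simp (auto intro!: sum.cong)

text \<open>Cholesky-type factorization: eliminate one coordinate at a time by passing to the
  Schur complement of a nonzero diagonal entry, which contributes one square.\<close>

lemma psd_on_sum_of_squares:
  assumes "finite M" "hermitian_matrix c" "psd_on M c"
  shows "\<exists>(N::nat) a. \<forall>u. herm_form M c u = of_real (\<Sum>j<N. (cmod (\<Sum>\<alpha>\<in>M. a j \<alpha> * u \<alpha>))\<^sup>2)"
  using assms
proof (induction M arbitrary: c rule: finite_induct)
  case empty
  show ?case by (auto simp: herm_form_def)
next
  case (insert x F c)
  let ?I = "insert x F"
  show ?case
  proof (cases "c x x = 0")
    case True
    have drop: "herm_form ?I c u = herm_form F c u" for u
      by (rule psd_on_drop_zero_diag[OF insert.prems(1) insert.hyps True insert.prems(2)])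
    then have "psd_on F c"
      using insert.prems(2) by (simp add: psd_on_def)
    then obtain N :: nat and a :: "nat \<Rightarrow> 'a \<Rightarrow> complex" where a: "\<forall>u. herm_form F c u = of_real (\<Sum>j<N. (cmod (\<Sum>\<alpha>\<in>F. a j \<alpha> * u \<alpha>))\<^sup>2)"
      using insert.IH[OF insert.prems(1)] by blast
    show ?thesis
      by (intro exI[of _ N] exI[of _ "\<lambda>j \<alpha>. if \<alpha> = x then 0 else a j \<alpha>"])
         (simp only: sum_insert_zeroed[OF insert.hyps] a drop simp_thms)
  next
    case False
    define r where "r = Re (c x x)"
    have cxx: "c x x = of_real r"
      unfolding r_def by (rule hermitian_matrix_diag_real[OF insert.prems(1)])
    have "0 \<le> r"
      unfolding r_def by (rule psd_on_diag_nonneg[OF insert.prems(2)]) (use insert.hyps(1) in auto)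
    moreover have "r \<noteq> 0"
      using False cxx by auto
    ultimately have "r > 0"
      by simp
    obtain N :: nat and a :: "nat \<Rightarrow> 'a \<Rightarrow> complex" where a: "\<forall>u. herm_form F (schur_complement c x) u
        = of_real (\<Sum>j<N. (cmod (\<Sum>\<alpha>\<in>F. a j \<alpha> * u \<alpha>))\<^sup>2)"
      using insert.IH[OF hermitian_matrix_schur_complement[OF insert.prems(1)]
          psd_on_schur_complement[OF insert.prems(1) insert.hyps False insert.prems(2)]] by blast
    define a' where "a' j \<alpha> = (if j < N then (if \<alpha> = x then 0 else a j \<alpha>) else c \<alpha> x / of_real (sqrt r))" for j \<alpha>
    show ?thesis
    proof (intro exI[of _ "Suc N"] exI[of _ a'] allI)
      fix u
      define L where "L = (\<Sum>\<alpha>\<in>?I. c \<alpha> x * u \<alpha>)"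
      have "herm_form ?I c u = L * cnj L / c x x + herm_form F (schur_complement c x) u"
        unfolding L_def by (rule herm_form_schur_split[OF insert.prems(1) insert.hyps False])
      also have "L * cnj L / c x x = of_real ((cmod L)\<^sup>2 / r)"
        by (simp add: cxx complex_norm_square[symmetric])
      also have "(cmod L)\<^sup>2 / r = (cmod (\<Sum>\<alpha>\<in>?I. a' N \<alpha> * u \<alpha>))\<^sup>2"
        using \<open>r > 0\<close> by (simp add: a'_def L_def sum_divide_distrib[symmetric] norm_divide power_divide)
      also have "herm_form F (schur_complement c x) u = of_real (\<Sum>j<N. (cmod (\<Sum>\<alpha>\<in>?I. a' j \<alpha> * u \<alpha>))\<^sup>2)"
        unfolding a[rule_format] a'_def by (intro arg_cong[of _ _ of_real] sum.cong refl) (simp add: sum_insert_zeroed[OF insert.hyps])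
      finally show "herm_form ?I c u = of_real (\<Sum>j<Suc N. (cmod (\<Sum>\<alpha>\<in>?I. a' j \<alpha> * u \<alpha>))\<^sup>2)"
        by simp
    qed
  qed
qed

lemma pd_on_solvable:
  assumes "finite M" "hermitian_matrix c"
    and "pd_on M c"
  shows "\<exists>u. \<forall>\<beta>\<in>M. (\<Sum>\<alpha>\<in>M. c \<alpha> \<beta> * u \<alpha>) = v \<beta>"
  using assms
proof (induction M arbitrary: c v rule: finite_induct)
  case empty
  show ?case by simp
next
  case (insert x F c v)
  have "c x x \<noteq> 0"
    using pd_on_diag_pos[OF insert.prems(2)] insert.hyps(1) by fastforce
  obtain u0 where u0: "\<forall>\<beta>\<in>F. (\<Sum>\<alpha>\<in>F. schur_complement c x \<alpha> \<beta> * u0 \<alpha>) = v \<beta> - c x \<beta> * v x / c x x"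
    using insert.IH[OF hermitian_matrix_schur_complement[OF insert.prems(1)]
        pd_on_schur_complement[OF insert.prems(1) insert.hyps \<open>c x x \<noteq> 0\<close> insert.prems(2)],
        of "\<lambda>\<beta>. v \<beta> - c x \<beta> * v x / c x x"] by blast
  define u where "u = u0(x := (v x - (\<Sum>\<alpha>\<in>F. c \<alpha> x * u0 \<alpha>)) / c x x)"
  have sum_u: "(\<Sum>\<alpha>\<in>insert x F. c \<alpha> \<beta> * u \<alpha>) = c x \<beta> * u x + (\<Sum>\<alpha>\<in>F. c \<alpha> \<beta> * u0 \<alpha>)" for \<beta>
    using insert.hyps by (auto simp: u_def intro!: sum.cong)
  have "(\<Sum>\<alpha>\<in>insert x F. c \<alpha> \<beta> * u \<alpha>) = v \<beta>" if "\<beta> \<in> insert x F" for \<beta>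
  proof (cases "\<beta> = x")
    case True
    then show ?thesis
      unfolding sum_u using \<open>c x x \<noteq> 0\<close> by (simp add: u_def field_simps)
  next
    case False
    then have "(\<Sum>\<alpha>\<in>F. c \<alpha> \<beta> * u0 \<alpha>) - c x \<beta> / c x x * (\<Sum>\<alpha>\<in>F. c \<alpha> x * u0 \<alpha>) = v \<beta> - c x \<beta> * v x / c x x"
      using u0 that by (simp add: schur_complement_def sum_subtractf sum_distrib_left algebra_simps)
    then show ?thesis
      unfolding sum_u using \<open>c x x \<noteq> 0\<close> by (simp add: u_def field_simps)
  qed
  then show ?case by blast
qed

section \<open>Polarization\<close>

lemma Reals_islimpt_0: "(0::complex) islimpt \<real>"
proof (rule islimpt_approachable[THEN iffD2], intro allI impI)
  fix e :: real
  assume "0 < e"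
  then show "\<exists>x'\<in>(\<real>::complex set). x' \<noteq> 0 \<and> dist x' 0 < e"
    by (intro bexI[of _ "of_real (e/2)"]) auto
qed

text \<open>For real x and y the points (x + iy, x - iy) exhaust the set where the second argument is
  the conjugate of the first; two analytic continuations from the real axis, first in x and then
  in y, spread the vanishing to all of C^2.\<close>

lemma vanishing_on_conj_diagonal:
  fixes H :: "complex \<Rightarrow> complex \<Rightarrow> complex"
  assumes zero: "\<And>t. H t (cnj t) = 0"
    and hol: "\<And>A B C D. (\<lambda>x. H (A*x+B) (C*x+D)) holomorphic_on UNIV"
  shows "H s u = 0"
proof -
  have real_y: "H (x + \<i> * of_real y) (x - \<i> * of_real y) = 0" for x :: complex and y :: real
  proof (rule analytic_continuation[where f="\<lambda>x. H (x + \<i> * of_real y) (x - \<i> * of_real y)"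
        and S=UNIV and U=\<real> and \<xi>=0])
    show "(\<lambda>x. H (x + \<i> * of_real y) (x - \<i> * of_real y)) holomorphic_on UNIV"
      using hol[of 1 "\<i> * of_real y" 1 "- (\<i> * of_real y)"] by simp
    fix z :: complex
    assume "z \<in> \<real>"
    then have "cnj (z + \<i> * of_real y) = z - \<i> * of_real y"
      by (auto elim: Reals_cases)
    then show "H (z + \<i> * of_real y) (z - \<i> * of_real y) = 0"
      using zero by metis
  qed (auto intro: Reals_islimpt_0)
  have all_y: "H (x + \<i> * y) (x - \<i> * y) = 0" for x y :: complex
  proof (rule analytic_continuation[where f="\<lambda>y. H (x + \<i> * y) (x - \<i> * y)"
        and S=UNIV and U=\<real> and \<xi>=0])
    show "(\<lambda>y. H (x + \<i> * y) (x - \<i> * y)) holomorphic_on UNIV"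
      using hol[of "\<i>" x "-\<i>" x] by (simp add: algebra_simps)
  qed (auto intro: Reals_islimpt_0 real_y elim!: Reals_cases)
  have "s = (s+u)/2 + \<i> * ((s-u)/(2*\<i>))" "u = (s+u)/2 - \<i> * ((s-u)/(2*\<i>))"
    by (simp_all add: field_simps)
  then show ?thesis
    using all_y by metis
qed

definition cline :: "complex^'n \<Rightarrow> complex^'n \<Rightarrow> complex \<Rightarrow> complex^'n" where
  "cline b d s = (\<chi> k. b $ k + s * d $ k)"

text \<open>The kernels F(z, w) used below are polynomials in z and in the conjugate of w; all that
  polarization needs is holomorphy along affine complex lines in each argument.\<close>

definition sesqui_holomorphic :: "(complex^'n \<Rightarrow> complex^'n \<Rightarrow> complex) \<Rightarrow> bool" where
  "sesqui_holomorphic F \<longleftrightarrow>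
     (\<forall>b d A B C D. (\<lambda>x. F (cline b d (A*x+B)) (cline b d (cnj (C*x+D)))) holomorphic_on UNIV)"

lemma polarization:
  assumes "sesqui_holomorphic F" "\<And>z. F z z = 0"
  shows "F z w = 0"
proof -
  define H where "H s u = F (cline w (z - w) s) (cline w (z - w) (cnj u))" for s u
  have "H 1 0 = 0"
  proof (rule vanishing_on_conj_diagonal[of H])
    show "H t (cnj t) = 0" for t
      using assms(2) by (simp add: H_def)
    show "(\<lambda>x. H (A*x+B) (C*x+D)) holomorphic_on UNIV" for A B C D
      using assms(1) unfolding sesqui_holomorphic_def H_def by blast
  qed
  moreover have "cline w (z - w) 1 = z" "cline w (z - w) (cnj 0) = w"
    by (simp_all add: cline_def vec_eq_iff)
  ultimately show ?thesis
    by (simp add: H_def)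
qed

lemma holomorphic_on_mono_cline [holomorphic_intros]:
  "f holomorphic_on S \<Longrightarrow> (\<lambda>x. mono (cline b d (f x)) \<alpha>) holomorphic_on S"
  unfolding mono_def cline_def by (simp, intro holomorphic_intros)

lemma holomorphic_on_cnj_mono_cline [holomorphic_intros]:
  assumes "f holomorphic_on S"
  shows "(\<lambda>x. cnj (mono (cline b d (cnj (f x))) \<beta>)) holomorphic_on S"
proof -
  have "cnj (mono (cline b d (cnj s)) \<beta>) = mono (cline (\<chi> i. cnj (b $ i)) (\<chi> i. cnj (d $ i)) s) \<beta>" for s
    by (simp add: mono_def cline_def cnj_prod)
  then show ?thesis
    by (simp add: holomorphic_intros assms)
qed

section \<open>Coefficients of polynomials and bihomogeneous kernels\<close>

lemma power_sum_coeff: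
  fixes e :: "'a \<Rightarrow> complex"
  assumes "finite S" "\<And>s. (\<Sum>x\<in>S. e x * s ^ p x) = K * s ^ i"
  shows "(\<Sum>x | x \<in> S \<and> p x = i. e x) = K"
proof -
  define N where "N = Max (insert i (p ` S))"
  have pN: "p x \<le> N" if "x \<in> S" for x
    unfolding N_def using assms(1) that by (intro Max_ge) auto
  have iN: "i \<le> N"
    unfolding N_def using assms(1) by (intro Max_ge) auto
  define a where "a k = (\<Sum>x | x \<in> S \<and> p x = k. e x) - (if k = i then K else 0)" for k
  have "(\<Sum>k\<le>N. a k * s ^ k) = 0" for s
  proof -
    have "(\<Sum>k\<le>N. (\<Sum>x | x \<in> S \<and> p x = k. e x) * s ^ k) = (\<Sum>k\<le>N. \<Sum>x | x \<in> S \<and> p x = k. e x * s ^ p x)"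
      by (intro sum.cong refl) (auto simp: sum_distrib_right)
    also have "\<dots> = K * s ^ i"
      unfolding assms(2)[symmetric] by (rule sum.group) (use assms(1) pN in auto)
    finally have grouped: "(\<Sum>k\<le>N. (\<Sum>x | x \<in> S \<and> p x = k. e x) * s ^ k) = K * s ^ i" .
    have "(\<Sum>k\<le>N. (if k = i then K else 0) * s ^ k) = (\<Sum>k\<le>N. if k = i then K * s ^ k else 0)"
      by (rule sum.cong) auto
    also have "\<dots> = K * s ^ i"
      using iN by simp
    finally have delta: "(\<Sum>k\<le>N. (if k = i then K else 0) * s ^ k) = K * s ^ i" .
    show ?thesis
      unfolding a_def left_diff_distrib sum_subtractf grouped delta by simp
  qed
  then have "a i = 0"
    using polyfun_eq_0[of a N] iN by blast
  then show ?thesis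
    by (simp add: a_def)
qed

lemma power_sum2_coeff:
  fixes e :: "'a \<Rightarrow> complex"
  assumes "finite S" "\<And>s u. (\<Sum>x\<in>S. e x * s ^ p x * u ^ q x) = K * s ^ i * u ^ j"
  shows "(\<Sum>x | x \<in> S \<and> p x = i \<and> q x = j. e x) = K"
proof -
  have "(\<Sum>x | x \<in> S \<and> p x = i. e x * u ^ q x) = K * u ^ j" for u
  proof (rule power_sum_coeff[OF assms(1)])
    show "(\<Sum>x\<in>S. e x * u ^ q x * s ^ p x) = K * u ^ j * s ^ i" for s
      using assms(2)[of s u] by (simp only: mult_ac)
  qed
  then have "(\<Sum>x | x \<in> {x \<in> S. p x = i} \<and> q x = j. e x) = K"
    by (intro power_sum_coeff[where S="{x \<in> S. p x = i}" and p=q]) (use assms(1) in auto)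
  then show ?thesis
    by (simp add: conj_assoc)
qed

lemma mono_sum_zero_fibre_sum_zero:
  fixes b :: "('n::finite \<Rightarrow> nat) \<Rightarrow> complex"
  assumes "finite K" "finite G" "\<forall>z::complex^'n. (\<Sum>\<gamma>\<in>G. b \<gamma> * (\<Prod>k\<in>K. (z $ k) ^ \<gamma> k)) = 0"
  shows "(\<Sum>\<gamma> | \<gamma> \<in> G \<and> (\<forall>k\<in>K. \<gamma> k = \<gamma>0 k). b \<gamma>) = 0"
  using assms
proof (induction K arbitrary: G rule: finite_induct)
  case empty
  then show ?case by simp
next
  case (insert k K G)
  define G' where "G' = {\<gamma> \<in> G. \<gamma> k = \<gamma>0 k}"
  have "(\<Sum>\<gamma>\<in>G'. b \<gamma> * (\<Prod>j\<in>K. (z $ j) ^ \<gamma> j)) = 0" for z :: "complex^'n"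
  proof -
    have "(\<Sum>\<gamma>\<in>G. (b \<gamma> * (\<Prod>j\<in>K. (z $ j) ^ \<gamma> j)) * s ^ \<gamma> k) = 0 * s ^ \<gamma>0 k" for s
    proof -
      define z' where "z' = (\<chi> j. if j = k then s else z $ j)"
      have "(\<Prod>j\<in>K. (z' $ j) ^ \<gamma> j) = (\<Prod>j\<in>K. (z $ j) ^ \<gamma> j)" for \<gamma>
        using insert.hyps(2) by (intro prod.cong) (auto simp: z'_def)
      then have "(\<Prod>j\<in>insert k K. (z' $ j) ^ \<gamma> j) = s ^ \<gamma> k * (\<Prod>j\<in>K. (z $ j) ^ \<gamma> j)" for \<gamma>
        using insert.hyps by simp (simp add: z'_def)
      then show ?thesis
        using insert.prems(2)[rule_format, of z'] by (simp add: mult_ac)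
    qed
    from power_sum_coeff[OF insert.prems(1) this] show ?thesis
      by (simp add: G'_def)
  qed
  then have "(\<Sum>\<gamma> | \<gamma> \<in> G' \<and> (\<forall>j\<in>K. \<gamma> j = \<gamma>0 j). b \<gamma>) = 0"
    using insert.IH[of G'] insert.prems(1) by (simp add: G'_def)
  moreover have "{\<gamma>. \<gamma> \<in> G' \<and> (\<forall>j\<in>K. \<gamma> j = \<gamma>0 j)} = {\<gamma>. \<gamma> \<in> G \<and> (\<forall>j\<in>insert k K. \<gamma> j = \<gamma>0 j)}"
    by (auto simp: G'_def)
  ultimately show ?case
    by simp
qed

lemma mono_sum_zero_coeff:
  fixes b :: "('n::finite \<Rightarrow> nat) \<Rightarrow> complex"
  assumes "finite G" "\<And>z. (\<Sum>\<gamma>\<in>G. b \<gamma> * mono z \<gamma>) = 0" "\<gamma>0 \<in> G"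
  shows "b \<gamma>0 = 0"
proof -
  have "(\<Sum>\<gamma> | \<gamma> \<in> G \<and> (\<forall>k\<in>UNIV. \<gamma> k = \<gamma>0 k). b \<gamma>) = 0"
    by (rule mono_sum_zero_fibre_sum_zero) (use assms in \<open>auto simp: mono_def\<close>)
  moreover have "{\<gamma>. \<gamma> \<in> G \<and> (\<forall>k\<in>UNIV. \<gamma> k = \<gamma>0 k)} = {\<gamma>0}"
    using assms(3) by (auto simp: fun_eq_iff)
  ultimately show ?thesis
    by simp
qed

lemma finite_multi_indices_degree: "finite {\<alpha>::'n::finite \<Rightarrow> nat. sum \<alpha> UNIV = m}"
proof (rule finite_subset)
  show "{\<alpha>::'n \<Rightarrow> nat. sum \<alpha> UNIV = m} \<subseteq> {f. \<forall>x. (x \<in> UNIV \<longrightarrow> f x \<in> {..m}) \<and> (x \<notin> UNIV \<longrightarrow> f x = 0)}"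
  proof
    fix \<alpha> :: "'n \<Rightarrow> nat"
    assume "\<alpha> \<in> {\<alpha>. sum \<alpha> UNIV = m}"
    then show "\<alpha> \<in> {f. \<forall>x. (x \<in> UNIV \<longrightarrow> f x \<in> {..m}) \<and> (x \<notin> UNIV \<longrightarrow> f x = 0)}"
      using member_le_sum[of _ UNIV \<alpha>] by auto
  qed
  show "finite {f::'n \<Rightarrow> nat. \<forall>x. (x \<in> UNIV \<longrightarrow> f x \<in> {..m}) \<and> (x \<notin> UNIV \<longrightarrow> f x = 0)}"
    by (rule finite_set_of_finite_funs) auto
qed

lemma mono_scale: "mono (\<chi> i. t * z $ i) \<alpha> = t ^ sum \<alpha> UNIV * mono z \<alpha>"
  by (simp add: mono_def power_mult_distrib prod.distrib power_sum)

lemma rval_eq_sum: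
  "rval c z w = (\<Sum>x\<in>{(\<alpha>, \<beta>). c \<alpha> \<beta> \<noteq> 0}. c (fst x) (snd x) * mono z (fst x) * cnj (mono w (snd x)))"
  unfolding rval_def by (simp add: case_prod_beta)

text \<open>Bihomogeneity says that the identity below holds for u = conj s; analytic continuation in
  (s, u) extends it to all pairs.\<close>

lemma bihomogeneous_rval_scaled:
  fixes c :: "('n::finite \<Rightarrow> nat) \<Rightarrow> ('n \<Rightarrow> nat) \<Rightarrow> complex"
  assumes "bihomogeneous m c"
  shows "(\<Sum>x\<in>{(\<alpha>, \<beta>). c \<alpha> \<beta> \<noteq> 0}. c (fst x) (snd x) * mono z (fst x) * cnj (mono z (snd x))
            * s ^ sum (fst x) UNIV * u ^ sum (snd x) UNIV)
       = rval c z z * s ^ m * u ^ m"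
    (is "?lhs s u = ?rhs s u")
proof -
  have "?lhs s u - ?rhs s u = 0"
  proof (rule vanishing_on_conj_diagonal[of "\<lambda>s u. ?lhs s u - ?rhs s u"])
    show "(\<lambda>x. ?lhs (A*x+B) (C*x+D) - ?rhs (A*x+B) (C*x+D)) holomorphic_on UNIV" for A B C D
      by (intro holomorphic_intros)
    fix t :: complex
    have "(t * cnj t) ^ m = of_real (cmod t ^ (2*m))"
      by (simp add: power_mult complex_norm_square[symmetric])
    then have "rval c (\<chi> i. t * z $ i) (\<chi> i. t * z $ i) = ?rhs t (cnj t)"
      using assms unfolding bihomogeneous_def by (simp add: power_mult_distrib mult_ac)
    moreover have "rval c (\<chi> i. t * z $ i) (\<chi> i. t * z $ i) = ?lhs t (cnj t)"
      unfolding rval_eq_sum by (intro sum.cong refl) (simp add: mono_scale mult_ac)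
    ultimately show "?lhs t (cnj t) - ?rhs t (cnj t) = 0"
      by simp
  qed
  then show ?thesis
    by simp
qed

lemma bihomogeneous_rval_diag:
  fixes c :: "('n::finite \<Rightarrow> nat) \<Rightarrow> ('n \<Rightarrow> nat) \<Rightarrow> complex"
  assumes fin: "finite {(\<alpha>, \<beta>). c \<alpha> \<beta> \<noteq> 0}" and bihom: "bihomogeneous m c"
  defines "M \<equiv> {\<alpha>::'n \<Rightarrow> nat. sum \<alpha> UNIV = m}"
  shows "rval c z z = (\<Sum>\<alpha>\<in>M. \<Sum>\<beta>\<in>M. c \<alpha> \<beta> * mono z \<alpha> * cnj (mono z \<beta>))"
proof -
  define S where "S = {(\<alpha>, \<beta>). c \<alpha> \<beta> \<noteq> 0}"
  define e where "e x = c (fst x) (snd x) * mono z (fst x) * cnj (mono z (snd x))" for x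
  define p where "p x = sum (fst x) UNIV" for x :: "('n \<Rightarrow> nat) \<times> ('n \<Rightarrow> nat)"
  define q where "q x = sum (snd x) UNIV" for x :: "('n \<Rightarrow> nat) \<times> ('n \<Rightarrow> nat)"
  have "rval c z z = (\<Sum>x | x \<in> S \<and> p x = m \<and> q x = m. e x)"
    using fin bihomogeneous_rval_scaled[OF bihom]
    by (intro power_sum2_coeff[symmetric]) (simp_all add: S_def e_def p_def q_def)
  also have "\<dots> = (\<Sum>x\<in>M \<times> M. e x)"
  proof (rule sum.mono_neutral_left)
    show "finite (M \<times> M)"
      unfolding M_def by (intro finite_cartesian_product finite_multi_indices_degree)
    show "{x. x \<in> S \<and> p x = m \<and> q x = m} \<subseteq> M \<times> M"
      by (auto simp: M_def p_def q_def mem_Times_iff)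
    show "\<forall>x\<in>M \<times> M - {x. x \<in> S \<and> p x = m \<and> q x = m}. e x = 0"
    proof
      fix x
      assume "x \<in> M \<times> M - {x. x \<in> S \<and> p x = m \<and> q x = m}"
      then have "c (fst x) (snd x) = 0"
        by (auto simp: M_def p_def q_def S_def mem_Times_iff case_prod_beta)
      then show "e x = 0"
        by (simp add: e_def)
    qed
  qed
  also have "\<dots> = (\<Sum>\<alpha>\<in>M. \<Sum>\<beta>\<in>M. c \<alpha> \<beta> * mono z \<alpha> * cnj (mono z \<beta>))"
    unfolding sum.cartesian_product by (simp add: e_def case_prod_beta)
  finally show ?thesis .
qed

lemma bihomogeneous_rval_expansion:
  fixes c :: "('n::finite \<Rightarrow> nat) \<Rightarrow> ('n \<Rightarrow> nat) \<Rightarrow> complex"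
  assumes "finite {(\<alpha>, \<beta>). c \<alpha> \<beta> \<noteq> 0}" and "bihomogeneous m c"
  defines "M \<equiv> {\<alpha>::'n \<Rightarrow> nat. sum \<alpha> UNIV = m}"
  shows "rval c z w = (\<Sum>\<alpha>\<in>M. \<Sum>\<beta>\<in>M. c \<alpha> \<beta> * mono z \<alpha> * cnj (mono w \<beta>))"
proof -
  let ?F = "\<lambda>z w. rval c z w - (\<Sum>\<alpha>\<in>M. \<Sum>\<beta>\<in>M. c \<alpha> \<beta> * mono z \<alpha> * cnj (mono w \<beta>))"
  have "sesqui_holomorphic ?F"
    unfolding sesqui_holomorphic_def rval_eq_sum by (intro allI holomorphic_intros)
  moreover have "?F z z = 0" for z
    using bihomogeneous_rval_diag[OF assms(1,2)] unfolding M_def by simp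
  ultimately have "?F z w = 0"
    by (rule polarization)
  then show ?thesis
    by simp
qed

section \<open>Integrals over the unit ball\<close>

definition ball_inner :: "(complex^'n::finite \<Rightarrow> complex) \<Rightarrow> (complex^'n \<Rightarrow> complex) \<Rightarrow> complex" where
  "ball_inner f g = integral (ball 0 1) (\<lambda>w. f w * cnj (g w))"

lemma continuous_on_mono [continuous_intros]: "continuous_on S (\<lambda>z::complex^'n::finite. mono z \<alpha>)"
  unfolding mono_def by (intro continuous_intros)

lemma continuous_on_hpoly [continuous_intros]: "continuous_on S (hpoly a)"
  unfolding hpoly_def by (intro continuous_intros)

lemma continuous_integrable_on_ball:
  fixes g :: "'a::euclidean_space \<Rightarrow> 'b::euclidean_space"
  assumes "continuous_on UNIV g"
  shows "g integrable_on ball a r"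
proof -
  have "set_integrable lborel (cball a r) g"
    unfolding set_integrable_def
    by (rule borel_integrable_compact) (use assms continuous_on_subset in auto)
  then have "g integrable_on cball a r"
    by (rule set_borel_integral_eq_integral(1))
  then show ?thesis
    by (rule integrable_spike_set) (auto intro: negligible_subset[OF negligible_sphere] simp: sphere_def)
qed

lemma ball_inner_commute: "cnj (ball_inner f g) = ball_inner g f"
  unfolding ball_inner_def integral_cnj by (simp add: mult.commute)

lemma ball_inner_sum_left:
  assumes "finite J" "\<And>j. continuous_on UNIV (g j)" "continuous_on UNIV f"
  shows "ball_inner (\<lambda>w. \<Sum>j\<in>J. b j * g j w) f = (\<Sum>j\<in>J. b j * ball_inner (g j) f)"
  unfolding ball_inner_def sum_distrib_right
  by (simp add: integral_sum assms continuous_integrable_on_ball continuous_intros mult.assoc)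

lemma ball_inner_sum_right:
  assumes "finite J" "\<And>j. continuous_on UNIV (g j)" "continuous_on UNIV f"
  shows "ball_inner f (\<lambda>w. \<Sum>j\<in>J. b j * g j w) = (\<Sum>j\<in>J. cnj (b j) * ball_inner f (g j))"
proof -
  have "ball_inner f (\<lambda>w. \<Sum>j\<in>J. b j * g j w) = cnj (\<Sum>j\<in>J. b j * ball_inner (g j) f)"
    by (simp only: ball_inner_sum_left[OF assms, symmetric] ball_inner_commute)
  then show ?thesis
    by (simp add: cnj_sum ball_inner_commute)
qed

lemma Tinner_kernel_expansion:
  fixes c :: "('n::finite \<Rightarrow> nat) \<Rightarrow> ('n \<Rightarrow> nat) \<Rightarrow> complex" and g :: "'j \<Rightarrow> complex^'n \<Rightarrow> complex"
  assumes "finite J" "\<And>z w. rval c z w = (\<Sum>j\<in>J. \<Sum>k\<in>J. C j k * g j z * cnj (g k w))"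
    and "\<And>j. continuous_on UNIV (g j)" "continuous_on UNIV f"
  shows "Tinner c f = herm_form J C (\<lambda>j. ball_inner (g j) f)"
proof -
  have "Top c f z = integral (ball 0 1) (\<lambda>w. \<Sum>j\<in>J. \<Sum>k\<in>J. (C j k * g j z) * (f w * cnj (g k w)))" for z
    unfolding Top_def assms(2) sum_distrib_right by (simp add: mult_ac)
  also have "\<dots> z = (\<Sum>j\<in>J. \<Sum>k\<in>J. (C j k * g j z) * ball_inner f (g k))" for z
    using assms(1,3,4) by (simp add: integral_sum continuous_integrable_on_ball continuous_intros ball_inner_def)
  finally have Top: "Top c f z = (\<Sum>j\<in>J. (\<Sum>k\<in>J. C j k * ball_inner f (g k)) * g j z)" for z
    by (simp add: sum_distrib_left sum_distrib_right mult_ac)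
  have "Tinner c f = ball_inner (\<lambda>z. \<Sum>j\<in>J. (\<Sum>k\<in>J. C j k * ball_inner f (g k)) * g j z) f"
    unfolding Tinner_def ball_inner_def Top ..
  also have "\<dots> = (\<Sum>j\<in>J. (\<Sum>k\<in>J. C j k * ball_inner f (g k)) * ball_inner (g j) f)"
    using assms(1,3,4) by (rule ball_inner_sum_left)
  finally show ?thesis
    unfolding herm_form_def ball_inner_commute[symmetric, of f] by (simp add: sum_distrib_left sum_distrib_right mult_ac)
qed

lemma herm_form_gram:
  assumes "finite J" "\<And>j. continuous_on UNIV (g j)"
  shows "herm_form J (\<lambda>j k. ball_inner (g j) (g k)) b
       = ball_inner (\<lambda>w. \<Sum>j\<in>J. b j * g j w) (\<lambda>w. \<Sum>j\<in>J. b j * g j w)"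
proof -
  have cont: "continuous_on UNIV (\<lambda>w. \<Sum>j\<in>J. b j * g j w)"
    using assms(2) by (intro continuous_intros)
  have "ball_inner (\<lambda>w. \<Sum>j\<in>J. b j * g j w) (\<lambda>w. \<Sum>j\<in>J. b j * g j w)
      = (\<Sum>j\<in>J. b j * ball_inner (g j) (\<lambda>w. \<Sum>k\<in>J. b k * g k w))"
    by (rule ball_inner_sum_left[OF assms cont])
  also have "\<dots> = (\<Sum>j\<in>J. b j * (\<Sum>k\<in>J. cnj (b k) * ball_inner (g j) (g k)))"
    by (simp only: ball_inner_sum_right[OF assms assms(2)])
  finally show ?thesis
    unfolding herm_form_def by (simp add: sum_distrib_left mult_ac)
qed

lemma ball_inner_self:
  assumes "continuous_on UNIV f"
  shows "ball_inner f f = of_real (integral (ball 0 1) (\<lambda>w. (cmod (f w))\<^sup>2))"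
proof -
  have "(\<lambda>w. (cmod (f w))\<^sup>2) integrable_on ball 0 1"
    by (intro continuous_integrable_on_ball continuous_intros assms)
  from has_integral_of_real[OF integrable_integral[OF this]]
  have "((\<lambda>w. of_real ((cmod (f w))\<^sup>2) :: complex) has_integral
      of_real (integral (ball 0 1) (\<lambda>w. (cmod (f w))\<^sup>2))) (ball 0 1)" .
  then show ?thesis
    unfolding ball_inner_def by (simp add: integral_unique flip: complex_norm_square)
qed

lemma ball_inner_self_zero_imp_vanishing:
  fixes f :: "complex^'n::finite \<Rightarrow> complex"
  assumes "continuous_on UNIV f" "ball_inner f f = 0" "w \<in> ball 0 1"
  shows "f w = 0"
proof -
  define F where "F = (\<lambda>w. (cmod (f w))\<^sup>2)"
  have contF: "continuous_on UNIV F"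
    unfolding F_def by (intro continuous_intros assms(1))
  have "integral (ball 0 1) F = 0"
    using assms(2) ball_inner_self[OF assms(1)] by (simp add: F_def)
  then have "(F has_integral 0) (ball 0 1)"
    using integrable_integral[OF continuous_integrable_on_ball[OF contF, of 0 1]] by simp
  then have int0: "(F has_integral 0) (closure (ball 0 1))"
    using has_integral_closure[of "ball 0 1" F 0] negligible_sphere[of 0 1] by simp
  have "F w = 0"
  proof (rule has_integral_0_closure_imp_0[where S="ball 0 1" and f=F and x=w, OF _ _ _ _ _ _ int0])
    show "continuous_on (closure (ball 0 1)) F"
      using contF continuous_on_subset by blast
    show "0 < emeasure lborel (ball (0::complex^'n) 1)"
      by (simp add: emeasure_ball)
    show "emeasure lborel (closure (ball (0::complex^'n) 1)) = emeasure lborel (ball (0::complex^'n) 1)"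
      using emeasure_ball[of 1 "0::complex^'n"] emeasure_cball[of 1 "0::complex^'n"] by simp
  qed (use assms(3) emeasure_lborel_ball_finite in \<open>auto simp: F_def\<close>)
  then show ?thesis
    by (simp add: F_def)
qed

lemma homogeneous_mono_sum_vanishing_on_ball:
  assumes "\<And>\<gamma>. \<gamma> \<in> M \<Longrightarrow> sum \<gamma> UNIV = m"
    and "\<And>w::complex^'n::finite. w \<in> ball 0 1 \<Longrightarrow> (\<Sum>\<gamma>\<in>M. b \<gamma> * mono w \<gamma>) = 0"
  shows "(\<Sum>\<gamma>\<in>M. b \<gamma> * mono z \<gamma>) = 0"
proof -
  define t :: real where "t = 1 / (norm z + 1)"
  have "t > 0"
    unfolding t_def by (simp add: add_nonneg_pos)
  have "norm (t *\<^sub>R z) < 1"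
    using \<open>t > 0\<close> by (simp add: t_def field_simps)
  moreover have "t *\<^sub>R z = (\<chi> i. of_real t * z $ i)"
    unfolding vec_eq_iff by (simp only: vector_scaleR_component vec_lambda_beta) (simp add: scaleR_conv_of_real)
  then have "(\<Sum>\<gamma>\<in>M. b \<gamma> * mono (t *\<^sub>R z) \<gamma>) = of_real t ^ m * (\<Sum>\<gamma>\<in>M. b \<gamma> * mono z \<gamma>)"
    using assms(1) by (simp add: mono_scale sum_distrib_left mult_ac)
  ultimately show ?thesis
    using assms(2)[of "t *\<^sub>R z"] \<open>t > 0\<close> by simp
qed

lemma pd_on_gram_mono:
  assumes "finite M" "\<And>\<gamma>. \<gamma> \<in> M \<Longrightarrow> sum \<gamma> UNIV = m"
  shows "pd_on M (\<lambda>\<alpha> \<beta>. ball_inner (\<lambda>w::complex^'n::finite. mono w \<alpha>) (\<lambda>w. mono w \<beta>))"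
  unfolding pd_on_def
proof (intro allI impI)
  fix b :: "('n \<Rightarrow> nat) \<Rightarrow> complex"
  assume nz: "\<exists>\<alpha>\<in>M. b \<alpha> \<noteq> 0"
  define f where "f w = (\<Sum>\<gamma>\<in>M. b \<gamma> * mono w \<gamma>)" for w :: "complex^'n"
  have contf: "continuous_on UNIV f"
    unfolding f_def by (intro continuous_intros)
  have gram: "herm_form M (\<lambda>\<alpha> \<beta>. ball_inner (\<lambda>w. mono w \<alpha>) (\<lambda>w. mono w \<beta>)) b = ball_inner f f"
    unfolding f_def by (rule herm_form_gram) (use assms(1) in \<open>auto intro: continuous_intros\<close>)
  have "ball_inner f f \<noteq> 0"
  proof
    assume "ball_inner f f = 0"
    then have on_ball: "(\<Sum>\<gamma>\<in>M. b \<gamma> * mono w \<gamma>) = 0" if "w \<in> ball 0 1" for w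
      using ball_inner_self_zero_imp_vanishing[OF contf _ that] by (simp add: f_def)
    have "(\<Sum>\<gamma>\<in>M. b \<gamma> * mono w \<gamma>) = 0" for w
      by (rule homogeneous_mono_sum_vanishing_on_ball[OF assms(2) on_ball])
    then have "b \<alpha> = 0" if "\<alpha> \<in> M" for \<alpha>
      by (rule mono_sum_zero_coeff[OF assms(1) _ that])
    with nz show False
      by blast
  qed
  moreover have "0 \<le> Re (ball_inner f f)"
    by (simp add: ball_inner_self[OF contf] integral_nonneg continuous_integrable_on_ball continuous_intros contf)
  ultimately show "0 < Re (herm_form M (\<lambda>\<alpha> \<beta>. ball_inner (\<lambda>w. mono w \<alpha>) (\<lambda>w. mono w \<beta>)) b)"
    by (simp add: gram ball_inner_self[OF contf] order_less_le)
qed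

section \<open>Non-negativity of T_r and sums of squares\<close>

lemma P_inf_imp_Tinner_nonneg:
  fixes c :: "('n::finite \<Rightarrow> nat) \<Rightarrow> ('n \<Rightarrow> nat) \<Rightarrow> complex"
  assumes "P_inf c" and "continuous_on UNIV f"
  shows "Tinner c f \<in> \<real> \<and> Re (Tinner c f) \<ge> 0"
proof -
  obtain N :: nat and h where h: "\<forall>z. rval c z z = of_real (\<Sum>j<N. (cmod (hpoly (h j) z))\<^sup>2)"
    using assms(1) unfolding P_inf_def by blast
  let ?F = "\<lambda>z w. rval c z w - (\<Sum>j<N. hpoly (h j) z * cnj (hpoly (h j) w))"
  have "sesqui_holomorphic ?F"
    unfolding sesqui_holomorphic_def rval_eq_sum hpoly_def
    by (simp only: cnj_sum complex_cnj_mult) (intro allI holomorphic_intros)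
  moreover have "?F z z = 0" for z
    by (simp only: h of_real_sum complex_norm_square diff_self)
  ultimately have "?F z w = 0" for z w
    by (rule polarization)
  moreover have "(\<Sum>j<N. \<Sum>k<N. (if j = k then 1 else 0) * hpoly (h j) z * cnj (hpoly (h k) w))
      = (\<Sum>j<N. hpoly (h j) z * cnj (hpoly (h j) w))" for z w
    by (intro sum.cong refl) (simp add: if_distrib[of "\<lambda>t. t * _"] sum.delta cong: if_cong)
  ultimately have kernel:
    "rval c z w = (\<Sum>j<N. \<Sum>k<N. (if j = k then 1 else 0) * hpoly (h j) z * cnj (hpoly (h k) w))" for z w
    by simp
  have "Tinner c f = herm_form {..<N} (\<lambda>j k. if j = k then 1 else 0) (\<lambda>j. ball_inner (hpoly (h j)) f)"
    by (rule Tinner_kernel_expansion[OF _ kernel]) (auto intro: continuous_intros assms(2))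
  also have "\<dots> = of_real (\<Sum>j<N. (cmod (ball_inner (hpoly (h j)) f))\<^sup>2)"
    by (rule herm_form_identity) simp
  finally show ?thesis
    by (simp add: sum_nonneg)
qed

lemma Tinner_nonneg_imp_psd_on:
  fixes c :: "('n::finite \<Rightarrow> nat) \<Rightarrow> ('n \<Rightarrow> nat) \<Rightarrow> complex" and m :: nat
  defines "M \<equiv> {\<alpha>::'n \<Rightarrow> nat. sum \<alpha> UNIV = m}"
  assumes expansion: "\<And>z w. rval c z w = (\<Sum>\<alpha>\<in>M. \<Sum>\<beta>\<in>M. c \<alpha> \<beta> * mono z \<alpha> * cnj (mono w \<beta>))"
    and pos: "\<forall>f\<in>Vm m. Tinner c f \<in> \<real> \<and> Re (Tinner c f) \<ge> 0"
  shows "psd_on M c"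
  unfolding psd_on_def
proof
  fix u :: "('n \<Rightarrow> nat) \<Rightarrow> complex"
  let ?G = "\<lambda>\<alpha> \<beta>. ball_inner (\<lambda>w::complex^'n. mono w \<alpha>) (\<lambda>w. mono w \<beta>)"
  have finM: "finite M"
    unfolding M_def by (rule finite_multi_indices_degree)
  have herm_G: "hermitian_matrix ?G"
    unfolding hermitian_matrix_def ball_inner_commute by simp
  have pd_G: "pd_on M ?G"
    by (rule pd_on_gram_mono[OF finM]) (simp add: M_def)
  obtain b where b: "\<forall>\<beta>\<in>M. (\<Sum>\<alpha>\<in>M. ?G \<alpha> \<beta> * b \<alpha>) = cnj (u \<beta>)"
    using pd_on_solvable[OF finM herm_G pd_G, of "\<lambda>\<beta>. cnj (u \<beta>)"] by blast
  define f where "f w = (\<Sum>\<alpha>\<in>M. b \<alpha> * mono w \<alpha>)" for w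
  have contf: "continuous_on UNIV f"
    unfolding f_def by (intro continuous_intros)
  have "ball_inner (\<lambda>w. mono w \<beta>) f = u \<beta>" if "\<beta> \<in> M" for \<beta>
  proof -
    have "ball_inner (\<lambda>w. mono w \<beta>) f = (\<Sum>\<alpha>\<in>M. cnj (b \<alpha>) * ?G \<beta> \<alpha>)"
      unfolding f_def by (rule ball_inner_sum_right[OF finM]) (intro continuous_intros)+
    also have "\<dots> = cnj (\<Sum>\<alpha>\<in>M. ?G \<alpha> \<beta> * b \<alpha>)"
      by (simp add: cnj_sum ball_inner_commute[of "\<lambda>w. mono w _"] mult.commute)
    finally show ?thesis
      using b that by simp
  qed
  then have "Tinner c f = herm_form M c u"
    unfolding Tinner_kernel_expansion[OF finM expansion continuous_on_mono contf]
    by (intro herm_form_cong)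
  moreover have "f \<in> Vm m"
    unfolding Vm_def f_def M_def by blast
  ultimately show "0 \<le> Re (herm_form M c u)"
    using pos by auto
qed

lemma psd_on_expansion_imp_P_inf:
  fixes c :: "('n::finite \<Rightarrow> nat) \<Rightarrow> ('n \<Rightarrow> nat) \<Rightarrow> complex"
  assumes "finite M" "hermitian_matrix c" "psd_on M c"
    and diag: "\<And>z. rval c z z = herm_form M c (\<lambda>\<alpha>. mono z \<alpha>)"
  shows "P_inf c"
proof -
  obtain N :: nat and a where a: "\<forall>u. herm_form M c u = of_real (\<Sum>j<N. (cmod (\<Sum>\<alpha>\<in>M. a j \<alpha> * u \<alpha>))\<^sup>2)"
    using psd_on_sum_of_squares[OF assms(1-3)] by blast
  define h where "h j \<alpha> = (if \<alpha> \<in> M then a j \<alpha> else 0)" for j \<alpha>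
  have fin_h: "finite {\<alpha>. h j \<alpha> \<noteq> 0}" for j
    by (rule finite_subset[OF _ assms(1)]) (auto simp: h_def)
  moreover have hpoly_h: "hpoly (h j) z = (\<Sum>\<alpha>\<in>M. a j \<alpha> * mono z \<alpha>)" for j z
  proof -
    have "hpoly (h j) z = (\<Sum>\<alpha>\<in>M. h j \<alpha> * mono z \<alpha>)"
      unfolding hpoly_def by (rule sum.mono_neutral_left[OF assms(1)]) (auto simp: h_def)
    then show ?thesis
      by (simp add: h_def)
  qed
  show ?thesis
    unfolding P_inf_def
  proof (intro exI[of _ N] exI[of _ h] conjI allI impI fin_h)
    show "rval c z z = of_real (\<Sum>j<N. (cmod (hpoly (h j) z))\<^sup>2)" for z
      unfolding diag a[rule_format] hpoly_h ..
  qed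
qed

lemma Vm_continuous:
  assumes "f \<in> Vm m"
  shows "continuous_on UNIV f"
proof -
  obtain b where "f = (\<lambda>z. \<Sum>\<alpha>\<in>{\<alpha>. sum \<alpha> UNIV = m}. b \<alpha> * mono z \<alpha>)"
    using assms unfolding Vm_def by blast
  then show ?thesis
    by (simp add: continuous_intros)
qed

lemma hermitian_symmetricD:
  assumes "hermitian_symmetric c"
  shows "hermitian_matrix c" "finite {(\<alpha>, \<beta>). c \<alpha> \<beta> \<noteq> 0}"
  using assms unfolding hermitian_symmetric_def hermitian_matrix_def finite_coeffs2_def
  by (rule conjunct2, rule conjunct1)

lemma Tinner_nonneg_imp_P_inf:
  fixes c :: "('n::finite \<Rightarrow> nat) \<Rightarrow> ('n \<Rightarrow> nat) \<Rightarrow> complex" and m :: nat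
  assumes "hermitian_symmetric c" "bihomogeneous m c"
    and pos: "\<forall>f\<in>Vm m. Tinner c f \<in> \<real> \<and> Re (Tinner c f) \<ge> 0"
  shows "P_inf c"
proof (rule psd_on_expansion_imp_P_inf)
  let ?M = "{\<alpha>::'n \<Rightarrow> nat. sum \<alpha> UNIV = m}"
  have expansion: "rval c z w = (\<Sum>\<alpha>\<in>?M. \<Sum>\<beta>\<in>?M. c \<alpha> \<beta> * mono z \<alpha> * cnj (mono w \<beta>))" for z w
    by (rule bihomogeneous_rval_expansion[OF hermitian_symmetricD(2)[OF assms(1)] assms(2)])
  show "finite ?M"
    by (rule finite_multi_indices_degree)
  show "hermitian_matrix c"
    by (rule hermitian_symmetricD(1)[OF assms(1)])
  show "psd_on ?M c"
    by (rule Tinner_nonneg_imp_psd_on[OF expansion pos])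
  show "rval c z z = herm_form ?M c (\<lambda>\<alpha>. mono z \<alpha>)" for z
    unfolding expansion herm_form_def ..
qed

theorem lemma3p2:
  fixes c :: "('n::finite \<Rightarrow> nat) \<Rightarrow> ('n \<Rightarrow> nat) \<Rightarrow> complex" and m :: nat
  assumes "hermitian_symmetric c" and "bihomogeneous m c"
  shows "P_inf c \<longleftrightarrow> (\<forall>f\<in>Vm m. Tinner c f \<in> \<real> \<and> Re (Tinner c f) \<ge> 0)"
proof
  assume "P_inf c"
  show "\<forall>f\<in>Vm m. Tinner c f \<in> \<real> \<and> Re (Tinner c f) \<ge> 0"
  proof
    fix f :: "complex^'n \<Rightarrow> complex"
    assume "f \<in> Vm m"
    then show "Tinner c f \<in> \<real> \<and> Re (Tinner c f) \<ge> 0"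
      by (rule P_inf_imp_Tinner_nonneg[OF \<open>P_inf c\<close> Vm_continuous])
  qed
next
  assume "\<forall>f\<in>Vm m. Tinner c f \<in> \<real> \<and> Re (Tinner c f) \<ge> 0"
  then show "P_inf c"
    by (rule Tinner_nonneg_imp_P_inf[OF assms])
qed

end
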